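(* For $\mathcal{E}\in(0,1)$ let $\ell=\pi/T_0$ and $U(z)=u_0(z/\ell)$, so that $U$ is odd, $2\pi$-periodic, $U'(0)>0$, and $\ell^2U''+U-U^3=0$, $\ell^2(U')^2=\frac12[(1-U^2)^2-\mathcal{E}^2]$. Let $a=\frac1\pi\int_0^{2\pi}U(z)\sin z\,dz$. Then, as $\mathcal{E}\to1$, the map $\mathcal{E}\mapsto(\ell,U)\in\mathbb{R}\times H^2_{\rm per}(0,2\pi)$ is uniquely parametrized by the small parameter $a>0$, and $$\mathcal{E}=1-a^2+\mathcal{O}(a^4),\qquad \ell^2=1-\tfrac34a^2+\mathcal{O}(a^4),\qquad U=a\sin(\cdot)+\mathcal{O}_{H^2_{\rm per}(0,2\pi)}(a^3).$$
   Context: For $\mathcal{E}\in(0,1)$, $u_0(x)=\sqrt{1-\mathcal{E}}\,\mathrm{sn}\big(x\sqrt{(1+\mathcal{E})/2},\,k\big)$ with $k=\sqrt{(1-\mathcal{E})/(1+\mathcal{E})}$ (Jacobi elliptic function of modulus $k$); it is odd with $u_0'(0)>0$, satisfies $u_0''+u_0-u_0^3=0$, $(u_0')^2=\frac12[(1-u_0^2)^2-\mathcal{E}^2]$, and has minimal period $2T_0=4\sqrt{2/(1+\mathcal{E})}\,K(k)$, $K$ the complete elliptic integral of the first kind. *)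

theory Defs
  imports "HOL-Analysis.Analysis"
begin

definition ellF :: "real \<Rightarrow> real \<Rightarrow> real" where
  "ellF phi k = (if 0 \<le> phi
      then integral {0..phi} (\<lambda>t. 1 / sqrt (1 - k\<^sup>2 * (sin t)\<^sup>2))
      else - integral {phi..0} (\<lambda>t. 1 / sqrt (1 - k\<^sup>2 * (sin t)\<^sup>2)))"

definition ellK :: "real \<Rightarrow> real" where
  "ellK k = ellF (pi / 2) k"

definition jam :: "real \<Rightarrow> real \<Rightarrow> real" where
  "jam x k = (THE phi. ellF phi k = x)"

definition jsn :: "real \<Rightarrow> real \<Rightarrow> real" where
  "jsn x k = sin (jam x k)"

definition modk :: "real \<Rightarrow> real" where
  "modk E = sqrt ((1 - E) / (1 + E))"

definition u0 :: "real \<Rightarrow> real \<Rightarrow> real" where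
  "u0 E x = sqrt (1 - E) * jsn (x * sqrt ((1 + E) / 2)) (modk E)"

text \<open>Half period T_0 (minimal period is 2 T_0).\<close>
definition T0 :: "real \<Rightarrow> real" where
  "T0 E = 2 * sqrt (2 / (1 + E)) * ellK (modk E)"

definition ell :: "real \<Rightarrow> real" where
  "ell E = pi / T0 E"

definition UU :: "real \<Rightarrow> real \<Rightarrow> real" where
  "UU E z = u0 E (z / ell E)"

definition amp :: "real \<Rightarrow> real" where
  "amp E = (1 / pi) * integral {0..2*pi} (\<lambda>z. UU E z * sin z)"

definition H2norm :: "(real \<Rightarrow> real) \<Rightarrow> real" where
  "H2norm f = sqrt (integral {0..2*pi}
      (\<lambda>z. (f z)\<^sup>2 + (deriv f z)\<^sup>2 + (deriv (deriv f) z)\<^sup>2))"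

end

theory Submission
  imports Defs
begin

text \<open>Write \<open>k\<close> for the modulus and \<open>A = sqrt (1 - E)\<close>. After rescaling the variable,
  \<open>U = A sin \<circ> \<phi>\<close> with \<open>\<phi>(z) = am (c z, k)\<close> and \<open>c = 2 K(k) / pi\<close>. For \<open>k\<^sup>2 \<le> 1/2\<close> the
  integrand of \<open>F(\<cdot>, k)\<close> is \<open>1 + O(k\<^sup>2)\<close>, so \<open>\<phi>(z) = z + O(k\<^sup>2)\<close> on \<open>[0, 2 pi]\<close>, and since
  \<open>am' = sqrt (1 - k\<^sup>2 sin\<^sup>2 am)\<close> the first two derivatives of \<open>sin \<circ> \<phi>\<close> are those of \<open>sin\<close> up to
  \<open>O(k\<^sup>2)\<close>; moreover \<open>c = 1 + k\<^sup>2/4 + O(k\<^sup>4)\<close>. Near \<open>E = 1\<close> one has \<open>k\<^sup>2 \<le> 1 - E = A\<^sup>2\<close>, hence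
  \<open>a = A (1 + O(A\<^sup>2))\<close>. This gives \<open>E = 1 - a\<^sup>2 + O(a\<^sup>4)\<close>, the expansion of
  \<open>\<ell>\<^sup>2 = (1 + E) / (2 c\<^sup>2)\<close>, and \<open>U - a sin = O(A k\<^sup>2 + |a - A|) = O(a\<^sup>3)\<close> in \<open>H\<^sup>2\<close>.
  All these estimates are Lipschitz in \<open>k\<^sup>2\<close>, which makes \<open>a\<close> continuous and strictly
  decreasing in \<open>E\<close> near 1; since \<open>a \<le> 2 A \<rightarrow> 0\<close>, it is a bijection onto an interval \<open>(0, a\<^sub>0)\<close>.\<close>

lemma sqrt_one_minus_ge:
  assumes "0 \<le> x" "x \<le> 1/2"
  shows "7/10 \<le> sqrt (1 - x)"
proof -
  have "(7/10::real) = sqrt ((7/10)^2)" by simp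
  also have "\<dots> \<le> sqrt (1 - x)" using assms by (intro real_sqrt_le_mono) (simp add: power2_eq_square)
  finally show ?thesis .
qed

lemma inv_sqrt_one_minus_bounds:
  assumes "0 \<le> x" "x \<le> 1/2"
  shows "1 \<le> 1 / sqrt (1 - x)" "1 / sqrt (1 - x) \<le> 1 + x"
    "0 \<le> 1 / sqrt (1 - x) - 1 - x/2" "1 / sqrt (1 - x) - 1 - x/2 \<le> 3 * x^2"
    "1 - x \<le> sqrt (1 - x)" "sqrt (1 - x) \<le> 1"
proof -
  define s where "s = sqrt (1 - x)"
  have s7: "7/10 \<le> s" using sqrt_one_minus_ge assms s_def by auto
  have s1: "s \<le> 1" using assms s_def by simp
  have ss: "s * s = 1 - x" using assms s_def by simp
  then have x: "x = 1 - s * s" by simp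
  have "s * s \<le> s * 1" using s7 s1 by (intro mult_left_mono) auto
  then show "1 - x \<le> sqrt (1 - x)" using ss s_def by simp
  show "sqrt (1 - x) \<le> 1" using s1 s_def by simp
  show "1 \<le> 1 / sqrt (1 - x)" using s1 s7 unfolding s_def[symmetric] by simp
  have "0 \<le> (1 - s) * (s * s + s - 1)"
    using s1 s7 mult_mono[OF s7 s7] by (intro mult_nonneg_nonneg) auto
  then have "1 \<le> s * (1 + (1 - s * s))" by (simp add: algebra_simps)
  then have "1 / s \<le> 1 + (1 - s * s)" using s7 by (simp add: divide_le_eq mult.commute)
  then show "1 / sqrt (1 - x) \<le> 1 + x" unfolding s_def[symmetric] using x by simp
  have "2 * s * (1/s - 1 - (1 - s * s)/2) = (s-1) * (s-1) * (s+2)"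
    using s7 by (simp add: algebra_simps, simp add: field_simps)
  then have e: "1/s - 1 - (1 - s * s)/2 = (s-1) * (s-1) * (s+2)/(2 * s)"
    using s7 by (simp add: eq_divide_eq mult.commute)
  have "0 \<le> (s-1) * (s-1) * (s+2)/(2 * s)" using s7 by simp
  then show "0 \<le> 1 / sqrt (1 - x) - 1 - x/2" unfolding s_def[symmetric] using x e by simp
  have "6 * s * 1 \<le> 6 * s * ((1+s) * (1+s))" using s7 by (intro mult_left_mono) (auto simp: algebra_simps)
  then have "s + 2 \<le> 6 * s * ((1+s) * (1+s))" using s7 s1 by linarith
  then have "(s-1) * (s-1) * (s+2) \<le> (s-1) * (s-1) * (6 * s * ((1+s) * (1+s)))"
    by (rule mult_left_mono) simp
  also have "\<dots> = 2 * s * (3 * ((1 - s * s) * (1 - s * s)))" by (simp add: algebra_simps)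
  finally have "(s-1) * (s-1) * (s+2)/(2 * s) \<le> 3 * ((1 - s * s) * (1 - s * s))"
    using s7 by (simp add: divide_le_eq mult.commute)
  then show "1 / sqrt (1 - x) - 1 - x/2 \<le> 3 * x^2"
    unfolding s_def[symmetric] using x e by (simp add: power2_eq_square)
qed

lemma inv_sqrt_one_minus_lipschitz:
  assumes "0 \<le> x" "x \<le> 1/2" "0 \<le> y" "y \<le> 1/2"
  shows "\<bar>1 / sqrt (1 - x) - 1 / sqrt (1 - y)\<bar> \<le> 2 * \<bar>x - y\<bar>"
proof -
  define s r where "s = sqrt (1 - x)" and "r = sqrt (1 - y)"
  have s7: "7/10 \<le> s" and r7: "7/10 \<le> r" using sqrt_one_minus_ge assms by (auto simp: s_def r_def)
  have "s * s = 1 - x" "r * r = 1 - y" using assms by (simp_all add: s_def r_def)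
  then have "(r - s) * (r + s) = x - y" by (simp add: algebra_simps)
  then have rs: "r - s = (x - y) / (r + s)" using s7 r7 by (simp add: eq_divide_eq)
  have "1/s - 1/r = (r - s) / (s * r)" using s7 r7 by (simp add: diff_frac_eq)
  also have "\<dots> = (x - y) / ((r + s) * (s * r))" by (simp only: rs divide_divide_eq_left)
  finally have eq: "1/s - 1/r = (x - y) / ((r + s) * (s * r))" .
  have "(14/10) * ((7/10) * (7/10)) \<le> (r + s) * (s * r)"
    using s7 r7 mult_mono[OF s7 r7] by (intro mult_mono) auto
  then have D: "1/2 \<le> (r + s) * (s * r)" by simp
  have "\<bar>(x - y) / ((r + s) * (s * r))\<bar> = \<bar>x - y\<bar> / ((r + s) * (s * r))" using D by simp
  also have "\<dots> \<le> \<bar>x - y\<bar> / (1/2)" using D by (intro divide_left_mono) auto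
  finally show ?thesis unfolding s_def r_def eq[unfolded s_def r_def] by simp
qed

lemma sin_sq_le_one: "(sin t)^2 \<le> (1::real)"
  by (metis abs_sin_le_one abs_square_le_1)

lemma sin_lipschitz: "\<bar>sin w - sin z\<bar> \<le> \<bar>w - z\<bar>" for w z :: real
proof -
  have "\<bar>sin w - sin z\<bar> = 2 * \<bar>sin ((w - z) / 2)\<bar> * \<bar>cos ((w + z) / 2)\<bar>"
    by (simp add: sin_diff_sin abs_mult)
  also have "\<dots> \<le> 2 * \<bar>(w - z) / 2\<bar> * 1"
    by (intro mult_mono abs_sin_x_le_abs_x) auto
  finally show ?thesis by simp
qed

lemma cos_lipschitz: "\<bar>cos w - cos z\<bar> \<le> \<bar>w - z\<bar>" for w z :: real
proof -
  have "\<bar>cos w - cos z\<bar> = 2 * \<bar>sin ((w + z) / 2)\<bar> * \<bar>sin ((z - w) / 2)\<bar>"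
    by (simp add: cos_diff_cos abs_mult)
  also have "\<dots> \<le> 2 * 1 * \<bar>(z - w) / 2\<bar>"
    by (intro mult_mono abs_sin_x_le_abs_x) auto
  finally show ?thesis by simp
qed

lemma has_integral_sin_sq:
  fixes a b :: real
  assumes "a \<le> b"
  shows "((\<lambda>t. (sin t)^2) has_integral (b - sin b * cos b)/2 - (a - sin a * cos a)/2) {a..b}"
proof (rule fundamental_theorem_of_calculus[OF assms])
  fix x :: real
  have "((\<lambda>t. (t - sin t * cos t)/2) has_real_derivative (1 - (cos x * cos x - sin x * sin x))/2) (at x)"
    by (auto intro!: derivative_eq_intros)
  moreover have "(1 - (cos x * cos x - sin x * sin x))/2 = (sin x)^2"
    using sin_cos_squared_add[of x] by (simp add: power2_eq_square algebra_simps)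
  ultimately show "((\<lambda>t. (t - sin t * cos t)/2) has_vector_derivative (sin x)^2) (at x within {a..b})"
    by (simp add: has_real_derivative_iff_has_vector_derivative[symmetric] has_field_derivative_at_within)
qed

definition ell_integrand :: "real \<Rightarrow> real \<Rightarrow> real" where
  "ell_integrand k t = 1 / sqrt (1 - k^2 * (sin t)^2)"

definition jdelta :: "real \<Rightarrow> real \<Rightarrow> real" where
  "jdelta k t = sqrt (1 - k^2 * (sin t)^2)"

lemma k_sin_sq_bounds:
  fixes k t :: real
  assumes "k^2 \<le> 1/2"
  shows "0 \<le> k^2 * (sin t)^2" "k^2 * (sin t)^2 \<le> 1/2" "k^2 * (sin t)^2 \<le> k^2"
proof -
  show "k^2 * (sin t)^2 \<le> k^2" by (intro mult_right_le_one_le) (auto simp: sin_sq_le_one)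
  then show "k^2 * (sin t)^2 \<le> 1/2" using assms by linarith
qed simp

lemma ell_integrand_bounds:
  fixes k t :: real
  assumes "k^2 \<le> 1/2"
  shows "1 \<le> ell_integrand k t" "\<bar>ell_integrand k t - 1\<bar> \<le> k^2" "ell_integrand k t \<le> 2"
    "\<bar>ell_integrand k t - 1 - k^2 * (sin t)^2 / 2\<bar> \<le> 3 * k^4"
proof -
  note b = k_sin_sq_bounds[OF assms, of t]
  note i = inv_sqrt_one_minus_bounds[OF b(1) b(2)]
  show "1 \<le> ell_integrand k t" using i by (simp add: ell_integrand_def)
  show "\<bar>ell_integrand k t - 1\<bar> \<le> k^2" using i b by (simp add: ell_integrand_def)
  show "ell_integrand k t \<le> 2" using i b assms by (simp add: ell_integrand_def)
  have "3 * (k^2 * (sin t)^2)^2 \<le> 3 * (k^2)^2" using b by (intro mult_left_mono power_mono) auto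
  then show "\<bar>ell_integrand k t - 1 - k^2 * (sin t)^2 / 2\<bar> \<le> 3 * k^4"
    using i by (simp add: ell_integrand_def power_mult_distrib)
qed

lemma ell_integrand_lipschitz_modulus:
  fixes k1 k2 t :: real
  assumes "k1^2 \<le> 1/2" "k2^2 \<le> 1/2"
  shows "\<bar>ell_integrand k1 t - ell_integrand k2 t\<bar> \<le> 2 * \<bar>k1^2 - k2^2\<bar>"
proof -
  note b1 = k_sin_sq_bounds[OF assms(1), of t] and b2 = k_sin_sq_bounds[OF assms(2), of t]
  have "\<bar>ell_integrand k1 t - ell_integrand k2 t\<bar> \<le> 2 * \<bar>k1^2 * (sin t)^2 - k2^2 * (sin t)^2\<bar>"
    unfolding ell_integrand_def using inv_sqrt_one_minus_lipschitz[OF b1(1,2) b2(1,2)] by simp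
  also have "\<bar>k1^2 * (sin t)^2 - k2^2 * (sin t)^2\<bar> = \<bar>k1^2 - k2^2\<bar> * (sin t)^2"
    by (simp add: left_diff_distrib[symmetric] abs_mult)
  also have "\<dots> \<le> \<bar>k1^2 - k2^2\<bar>"
    by (intro mult_right_le_one_le) (auto simp: sin_sq_le_one)
  finally show ?thesis by simp
qed

lemma continuous_on_ell_integrand:
  fixes k :: real
  assumes "k^2 \<le> 1/2"
  shows "continuous_on S (ell_integrand k)"
proof -
  have h: "1/2 \<le> 1 - k^2 * (sin t)^2" for t using k_sin_sq_bounds(2)[OF assms, of t] by linarith
  have "sqrt (1 - k^2 * (sin t)^2) \<noteq> 0" for t using h[of t] by simp
  then show ?thesis unfolding ell_integrand_def[abs_def] by (intro continuous_intros) auto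
qed

lemma integrable_ell_integrand:
  fixes k :: real
  assumes "k^2 \<le> 1/2"
  shows "ell_integrand k integrable_on {a..b}"
  by (intro integrable_continuous_real continuous_on_ell_integrand assms)

lemma ellF_eq_integral:
  "ellF phi k = (if 0 \<le> phi then integral {0..phi} (ell_integrand k)
                 else - integral {phi..0} (ell_integrand k))"
  unfolding ellF_def ell_integrand_def[abs_def] by simp

lemma ellF_0 [simp]: "ellF 0 k = 0"
  by (simp add: ellF_eq_integral)

lemma ellF_diff_integral:
  assumes "k^2 \<le> 1/2" "x \<le> y"
  shows "ellF y k - ellF x k = integral {x..y} (ell_integrand k)"
  using Henstock_Kurzweil_Integration.integral_combine[of x 0 y, OF _ _ integrable_ell_integrand[OF assms(1)]]
    Henstock_Kurzweil_Integration.integral_combine[of 0 x y, OF _ _ integrable_ell_integrand[OF assms(1)]]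
    Henstock_Kurzweil_Integration.integral_combine[of x y 0, OF _ _ integrable_ell_integrand[OF assms(1)]]
    assms(2)
  by (cases "0 \<le> x"; cases "0 \<le> y") (auto simp: ellF_eq_integral)

lemma has_real_derivative_ellF:
  assumes "k^2 \<le> 1/2"
  shows "((\<lambda>p. ellF p k) has_real_derivative ell_integrand k p) (at p)"
proof -
  define a where "a = p - 1"
  have "((\<lambda>q. integral {a..q} (ell_integrand k)) has_real_derivative ell_integrand k p) (at p within {a..p+1})"
    using continuous_on_ell_integrand[OF assms] by (intro integral_has_real_derivative) (auto simp: a_def)
  then have "((\<lambda>q. integral {a..q} (ell_integrand k)) has_real_derivative ell_integrand k p) (at p)"
    using at_within_Icc_at[of a p "p+1"] by (simp add: a_def)
  then have d: "((\<lambda>q. ellF a k + integral {a..q} (ell_integrand k)) has_real_derivative ell_integrand k p) (at p)"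
    using DERIV_add[OF DERIV_const[of "ellF a k"]] by fastforce
  show ?thesis
  proof (rule has_field_derivative_transform_within_open[OF d, of "{a<..}"])
    fix q assume "q \<in> {a<..}"
    then show "ellF a k + integral {a..q} (ell_integrand k) = ellF q k"
      using ellF_diff_integral[OF assms, of a q] by simp
  qed (auto simp: a_def)
qed

lemma continuous_on_ellF:
  assumes "k^2 \<le> 1/2"
  shows "continuous_on S (\<lambda>p. ellF p k)"
  using has_real_derivative_ellF[OF assms] by (meson DERIV_isCont continuous_at_imp_continuous_on)

lemma ellF_increment_bounds:
  assumes "k^2 \<le> 1/2" "x \<le> y"
  shows "y - x \<le> ellF y k - ellF x k"
    "\<bar>(ellF y k - ellF x k) - (y - x)\<bar> \<le> k^2 * (y - x)"
proof -
  note I = integrable_ell_integrand[OF assms(1), of x y]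
  have "integral {x..y} (\<lambda>t. 1) \<le> integral {x..y} (ell_integrand k)"
    using I ell_integrand_bounds[OF assms(1)] by (intro integral_le) auto
  then show "y - x \<le> ellF y k - ellF x k" using ellF_diff_integral[OF assms] assms by simp
  have "norm (integral {x..y} (\<lambda>t. ell_integrand k t - 1)) \<le> k^2 * (y - x)"
    using ell_integrand_bounds(2)[OF assms(1)] assms
    by (intro integral_bound continuous_intros continuous_on_ell_integrand) auto
  moreover have "integral {x..y} (\<lambda>t. ell_integrand k t - 1) = integral {x..y} (ell_integrand k) - (y - x)"
    using integral_diff[OF I integrable_const_ivl[of 1 x y]] assms by simp
  ultimately show "\<bar>(ellF y k - ellF x k) - (y - x)\<bar> \<le> k^2 * (y - x)"
    using ellF_diff_integral[OF assms] by simp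
qed

lemma ellF_abs_diff_ge:
  assumes "k^2 \<le> 1/2"
  shows "\<bar>x - y\<bar> \<le> \<bar>ellF x k - ellF y k\<bar>"
  using ellF_increment_bounds(1)[OF assms, of x y] ellF_increment_bounds(1)[OF assms, of y x]
  by (cases "x \<le> y") auto

lemma ellF_near_identity:
  assumes "k^2 \<le> 1/2"
  shows "\<bar>ellF p k - p\<bar> \<le> k^2 * \<bar>p\<bar>"
  using ellF_increment_bounds(2)[OF assms, of 0 p] ellF_increment_bounds(2)[OF assms, of p 0]
  by (cases "0 \<le> p") auto

lemma ellF_lipschitz_modulus:
  assumes "k1^2 \<le> 1/2" "k2^2 \<le> 1/2"
  shows "\<bar>ellF p k1 - ellF p k2\<bar> \<le> 2 * \<bar>k1^2 - k2^2\<bar> * \<bar>p\<bar>"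
proof -
  have *: "\<bar>(ellF y k1 - ellF x k1) - (ellF y k2 - ellF x k2)\<bar> \<le> 2 * \<bar>k1^2 - k2^2\<bar> * (y - x)"
    if "x \<le> y" for x y
  proof -
    have "norm (integral {x..y} (\<lambda>t. ell_integrand k1 t - ell_integrand k2 t)) \<le> 2 * \<bar>k1^2 - k2^2\<bar> * (y - x)"
      using ell_integrand_lipschitz_modulus[OF assms] that
      by (intro integral_bound continuous_intros continuous_on_ell_integrand assms) auto
    then show ?thesis
      using ellF_diff_integral[OF assms(1) that] ellF_diff_integral[OF assms(2) that]
        integral_diff[OF integrable_ell_integrand[OF assms(1)] integrable_ell_integrand[OF assms(2)], of x y]
      by simp
  qed
  show ?thesis using *[of 0 p] *[of p 0] by (cases "0 \<le> p") auto
qed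

lemma ellF_surj:
  assumes "k^2 \<le> 1/2"
  shows "\<exists>p. ellF p k = y"
proof (cases "0 \<le> y")
  case True
  then have "y \<le> ellF y k" using ellF_increment_bounds(1)[OF assms True] by simp
  then show ?thesis
    using IVT'[of "\<lambda>p. ellF p k" 0 y y] True continuous_on_ellF[OF assms] by auto
next
  case False
  then have "ellF y k \<le> y" using ellF_increment_bounds(1)[OF assms, of y 0] by simp
  then show ?thesis
    using IVT'[of "\<lambda>p. ellF p k" y y 0] False continuous_on_ellF[OF assms] by auto
qed

lemma ellF_jam:
  assumes "k^2 \<le> 1/2"
  shows "ellF (jam y k) k = y"
proof -
  obtain p where p: "ellF p k = y" using ellF_surj[OF assms] by blast
  have "ellF (THE p. ellF p k = y) k = y"
  proof (rule theI[of "\<lambda>p. ellF p k = y" p])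
    fix q assume "ellF q k = y"
    then show "q = p" using ellF_abs_diff_ge[OF assms, of q p] p by simp
  qed (rule p)
  then show ?thesis by (simp add: jam_def)
qed

lemma jam_lipschitz:
  assumes "k^2 \<le> 1/2"
  shows "\<bar>jam x k - jam y k\<bar> \<le> \<bar>x - y\<bar>"
  using ellF_abs_diff_ge[OF assms, of "jam x k" "jam y k"] ellF_jam[OF assms] by simp

lemma continuous_on_jam:
  assumes "k^2 \<le> 1/2"
  shows "continuous_on S (\<lambda>x. jam x k)"
proof -
  have "1-lipschitz_on S (\<lambda>x. jam x k)"
    by (rule lipschitz_onI) (use jam_lipschitz[OF assms] in \<open>auto simp: dist_real_def\<close>)
  then show ?thesis by (rule lipschitz_on_continuous_on)
qed

lemma has_real_derivative_jam:
  assumes "k^2 \<le> 1/2"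
  shows "((\<lambda>x. jam x k) has_real_derivative jdelta k (jam x k)) (at x)"
proof -
  have "((\<lambda>x. jam x k) has_real_derivative inverse (ell_integrand k (jam x k))) (at x)"
  proof (rule DERIV_inverse_function[where f="\<lambda>p. ellF p k" and a="x-1" and b="x+1"])
    show "((\<lambda>p. ellF p k) has_real_derivative ell_integrand k (jam x k)) (at (jam x k))"
      by (rule has_real_derivative_ellF[OF assms])
    show "isCont (\<lambda>x. jam x k) x"
      using continuous_on_jam[OF assms, of UNIV] by (simp add: continuous_on_eq_continuous_at)
    show "ell_integrand k (jam x k) \<noteq> 0" using ell_integrand_bounds(1)[OF assms, of "jam x k"] by simp
  qed (use ellF_jam[OF assms] in auto)
  then show ?thesis by (simp add: ell_integrand_def jdelta_def)
qed


lemma ellK_bounds: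
  fixes k :: real
  assumes "k^2 \<le> 1/2"
  shows "pi/2 \<le> ellK k" "\<bar>ellK k - pi/2\<bar> \<le> k^2 * (pi/2)"
    "\<bar>ellK k - pi/2 - pi * k^2 / 8\<bar> \<le> 5 * k^4"
proof -
  have e: "ellK k = ellF (pi/2) k - ellF 0 k" by (simp add: ellK_def)
  show "\<bar>ellK k - pi/2\<bar> \<le> k^2 * (pi/2)" using ellF_increment_bounds(2)[OF assms, of 0 "pi/2"] e by simp
  show "pi/2 \<le> ellK k" using ellF_increment_bounds(1)[OF assms, of 0 "pi/2"] e by simp
  define q where "q = (\<lambda>t. 1 + k^2 / 2 * (sin t)^2)"
  have "((\<lambda>t. 1::real) has_integral pi/2) {0..pi/2}"
    using has_integral_const_real[of "1::real" 0 "pi/2"] by simp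
  then have Iq: "(q has_integral pi/2 + k^2/2 * (pi/4)) {0..pi/2}"
    unfolding q_def using has_integral_sin_sq[of 0 "pi/2"]
    by (intro has_integral_add has_integral_mult_right) auto
  have "norm (integral {0..pi/2} (\<lambda>t. ell_integrand k t - q t)) \<le> 3 * k^4 * (pi/2 - 0)"
    using ell_integrand_bounds(4)[OF assms] unfolding q_def
    by (intro integral_bound continuous_intros continuous_on_ell_integrand assms) (auto simp: algebra_simps)
  also have "\<dots> = k^4 * (3 * pi / 2)" by simp
  also have "\<dots> \<le> k^4 * 5" using pi_approx(2) by (intro mult_left_mono) auto
  also have "integral {0..pi/2} (\<lambda>t. ell_integrand k t - q t) = ellK k - (pi/2 + k^2/2 * (pi/4))"
    using integral_diff[OF integrable_ell_integrand[OF assms] has_integral_integrable[OF Iq]]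
      integral_unique[OF Iq] e ellF_diff_integral[OF assms, of 0 "pi/2"] by simp
  finally show "\<bar>ellK k - pi/2 - pi * k^2 / 8\<bar> \<le> 5 * k^4" by (simp add: algebra_simps)
qed

lemma ellK_lipschitz_modulus:
  assumes "k1^2 \<le> 1/2" "k2^2 \<le> 1/2"
  shows "\<bar>ellK k1 - ellK k2\<bar> \<le> pi * \<bar>k1^2 - k2^2\<bar>"
  using ellF_lipschitz_modulus[OF assms, of "pi/2"] by (simp add: ellK_def mult.commute)

text \<open>The factor \<open>period_scale k\<close> rescales the period \<open>4 K(k)\<close> of sn to \<open>2 pi\<close>, so that
  \<open>sin (phase k z)\<close> is sn written in the variable z of \<open>UU\<close>.\<close>
definition period_scale :: "real \<Rightarrow> real" where
  "period_scale k = 2 * ellK k / pi"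

definition phase :: "real \<Rightarrow> real \<Rightarrow> real" where
  "phase k z = jam (period_scale k * z) k"

lemma period_scale_bounds:
  fixes k :: real
  assumes "k^2 \<le> 1/2"
  shows "1 \<le> period_scale k" "\<bar>period_scale k - 1\<bar> \<le> k^2" "period_scale k \<le> 2"
    "\<bar>period_scale k - 1 - k^2/4\<bar> \<le> 4 * k^4"
proof -
  note e = ellK_bounds[OF assms]
  show "1 \<le> period_scale k" using e(1) by (simp add: period_scale_def field_simps)
  have "period_scale k - 1 = (2/pi) * (ellK k - pi/2)" by (simp add: period_scale_def field_simps)
  then have "\<bar>period_scale k - 1\<bar> = (2/pi) * \<bar>ellK k - pi/2\<bar>" by (simp only: abs_mult) simp
  also have "\<dots> \<le> (2/pi) * (k^2 * (pi/2))" using e(2) by (intro mult_left_mono) auto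
  finally show c2: "\<bar>period_scale k - 1\<bar> \<le> k^2" by simp
  then show "period_scale k \<le> 2" using assms by simp
  have "period_scale k - 1 - k^2/4 = (2/pi) * (ellK k - pi/2 - pi * k^2 / 8)"
    by (simp add: period_scale_def field_simps)
  then have "\<bar>period_scale k - 1 - k^2/4\<bar> = (2/pi) * \<bar>ellK k - pi/2 - pi * k^2 / 8\<bar>"
    by (simp only: abs_mult) simp
  also have "\<dots> \<le> (2/pi) * (5 * k^4)" using e(3) by (intro mult_left_mono) auto
  also have "\<dots> = k^4 * (10/pi)" by simp
  also have "\<dots> \<le> k^4 * 4" using pi_approx(1) by (intro mult_left_mono) (auto simp: divide_le_eq)
  finally show "\<bar>period_scale k - 1 - k^2/4\<bar> \<le> 4 * k^4" by simp
qed

lemma period_scale_lipschitz_modulus: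
  assumes "k1^2 \<le> 1/2" "k2^2 \<le> 1/2"
  shows "\<bar>period_scale k1 - period_scale k2\<bar> \<le> 2 * \<bar>k1^2 - k2^2\<bar>"
proof -
  have "period_scale k1 - period_scale k2 = (2/pi) * (ellK k1 - ellK k2)"
    by (simp add: period_scale_def field_simps)
  then have "\<bar>period_scale k1 - period_scale k2\<bar> = (2/pi) * \<bar>ellK k1 - ellK k2\<bar>"
    by (simp only: abs_mult) simp
  also have "\<dots> \<le> (2/pi) * (pi * \<bar>k1^2 - k2^2\<bar>)"
    using ellK_lipschitz_modulus[OF assms] by (intro mult_left_mono) auto
  finally show ?thesis by simp
qed

lemma ellF_phase:
  assumes "k^2 \<le> 1/2"
  shows "ellF (phase k z) k = period_scale k * z"
  unfolding phase_def by (rule ellF_jam[OF assms])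

lemma abs_phase_le:
  assumes "k^2 \<le> 1/2" "z \<in> {0..2*pi}"
  shows "\<bar>phase k z\<bar> \<le> 4 * pi"
proof -
  have "\<bar>phase k z\<bar> \<le> period_scale k * z"
    using ellF_abs_diff_ge[OF assms(1), of "phase k z" 0] ellF_phase[OF assms(1)] assms(2)
      period_scale_bounds(1)[OF assms(1)] by simp
  also have "\<dots> \<le> 2 * (2 * pi)" using assms period_scale_bounds(3)[OF assms(1)] by (intro mult_mono) auto
  finally show ?thesis by simp
qed

lemma phase_near_identity:
  assumes "k^2 \<le> 1/2" "z \<in> {0..2*pi}"
  shows "\<bar>phase k z - z\<bar> \<le> 19 * k^2"
proof -
  have "\<bar>period_scale k * z - phase k z\<bar> \<le> k^2 * \<bar>phase k z\<bar>"
    using ellF_near_identity[OF assms(1), of "phase k z"] ellF_phase[OF assms(1)] by simp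
  also have "\<dots> \<le> k^2 * (4 * pi)" using abs_phase_le[OF assms] by (intro mult_left_mono) auto
  finally have a: "\<bar>period_scale k * z - phase k z\<bar> \<le> k^2 * (4 * pi)" .
  have "period_scale k * z - z = (period_scale k - 1) * z" by (simp add: algebra_simps)
  then have "\<bar>period_scale k * z - z\<bar> = \<bar>period_scale k - 1\<bar> * z" using assms(2) by (simp add: abs_mult)
  also have "\<dots> \<le> k^2 * (2 * pi)" using assms period_scale_bounds(2)[OF assms(1)] by (intro mult_mono) auto
  finally have b: "\<bar>period_scale k * z - z\<bar> \<le> k^2 * (2 * pi)" .
  have "\<bar>phase k z - z\<bar> \<le> k^2 * (6 * pi)" using a b by (simp add: algebra_simps)
  also have "\<dots> \<le> k^2 * 19" using pi_approx(2) by (intro mult_left_mono) auto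
  finally show ?thesis by simp
qed

lemma phase_lipschitz_modulus:
  assumes "k1^2 \<le> 1/2" "k2^2 \<le> 1/2" "z \<in> {0..2*pi}"
  shows "\<bar>phase k1 z - phase k2 z\<bar> \<le> 38 * \<bar>k1^2 - k2^2\<bar>"
proof -
  define D where "D = \<bar>k1^2 - k2^2\<bar>"
  have "\<bar>ellF (phase k2 z) k1 - ellF (phase k2 z) k2\<bar> \<le> 2 * D * \<bar>phase k2 z\<bar>"
    using ellF_lipschitz_modulus[OF assms(1,2)] D_def by simp
  also have "\<dots> \<le> 2 * D * (4 * pi)" using abs_phase_le[OF assms(2,3)] by (intro mult_left_mono) (auto simp: D_def)
  finally have e: "\<bar>ellF (phase k2 z) k1 - ellF (phase k2 z) k2\<bar> \<le> D * (8 * pi)" by simp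
  have "period_scale k1 * z - period_scale k2 * z = (period_scale k1 - period_scale k2) * z"
    by (simp add: algebra_simps)
  then have "\<bar>period_scale k1 * z - period_scale k2 * z\<bar> = \<bar>period_scale k1 - period_scale k2\<bar> * z"
    using assms(3) by (simp add: abs_mult)
  also have "\<dots> \<le> (2 * D) * (2 * pi)"
    using period_scale_lipschitz_modulus[OF assms(1,2)] assms(3) D_def by (intro mult_mono) auto
  finally have c: "\<bar>period_scale k1 * z - period_scale k2 * z\<bar> \<le> D * (4 * pi)" by simp
  have "\<bar>phase k1 z - phase k2 z\<bar> \<le> \<bar>ellF (phase k1 z) k1 - ellF (phase k2 z) k1\<bar>"
    by (rule ellF_abs_diff_ge[OF assms(1)])
  also have "\<dots> \<le> D * (12 * pi)"
    using e c ellF_phase[OF assms(1), of z] ellF_phase[OF assms(2), of z] by (simp add: algebra_simps)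
  also have "\<dots> \<le> D * 38" using pi_approx(2) by (intro mult_left_mono) (auto simp: D_def)
  finally show ?thesis by (simp add: D_def)
qed

lemma continuous_on_phase:
  assumes "k^2 \<le> 1/2"
  shows "continuous_on S (phase k)"
proof -
  have "continuous_on S ((\<lambda>x. jam x k) \<circ> (\<lambda>z. period_scale k * z))"
    by (intro continuous_on_compose continuous_intros continuous_on_jam[OF assms])
  then show ?thesis by (simp add: phase_def[abs_def] o_def)
qed

lemma jdelta_bounds:
  fixes k t :: real
  assumes "k^2 \<le> 1/2"
  shows "7/10 \<le> jdelta k t" "jdelta k t \<le> 1" "\<bar>jdelta k t - 1\<bar> \<le> k^2"
    "(jdelta k t)^2 = 1 - k^2 * (sin t)^2"
proof -
  note b = k_sin_sq_bounds[OF assms, of t]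
  note i = inv_sqrt_one_minus_bounds[OF b(1) b(2)]
  show "7/10 \<le> jdelta k t" using sqrt_one_minus_ge[OF b(1) b(2)] by (simp add: jdelta_def)
  show "jdelta k t \<le> 1" using i by (simp add: jdelta_def)
  show "\<bar>jdelta k t - 1\<bar> \<le> k^2" using i b by (simp add: jdelta_def)
  show "(jdelta k t)^2 = 1 - k^2 * (sin t)^2" using b by (simp add: jdelta_def)
qed

lemma has_real_derivative_phase:
  assumes "k^2 \<le> 1/2"
  shows "(phase k has_real_derivative period_scale k * jdelta k (phase k z)) (at z)"
  using DERIV_chain2[OF has_real_derivative_jam[OF assms] DERIV_cmult_Id[of "period_scale k" z]]
  by (simp add: phase_def[abs_def] mult.commute)

lemma has_real_derivative_jdelta_phase:
  assumes "k^2 \<le> 1/2"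
  shows "((\<lambda>z. jdelta k (phase k z)) has_real_derivative
           - (period_scale k * k^2 * sin (phase k z) * cos (phase k z))) (at z)"
proof -
  define t where "t = phase k z"
  have pos: "0 < 1 - k^2 * (sin t)^2" using k_sin_sq_bounds(2)[OF assms, of t] by simp
  have "(jdelta k has_real_derivative
      (inverse (sqrt (1 - k^2 * (sin t)^2)) / 2) * (- (k^2 * (2 * sin t * cos t)))) (at t)"
    unfolding jdelta_def[abs_def]
    by (rule DERIV_chain2[where f=sqrt and g="\<lambda>t. 1 - k^2 * (sin t)^2", OF DERIV_real_sqrt[OF pos]])
       (auto intro!: derivative_eq_intros simp: power2_eq_square)
  then have "(jdelta k has_real_derivative - (k^2 * sin t * cos t) / jdelta k t) (at t)"
    by (simp add: jdelta_def field_simps)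
  from DERIV_chain2[OF this[unfolded t_def] has_real_derivative_phase[OF assms]]
  show ?thesis
    using jdelta_bounds(1)[OF assms, of "phase k z"] by (simp add: field_simps power2_eq_square)
qed


definition sin_phase_d1 :: "real \<Rightarrow> real \<Rightarrow> real" where
  "sin_phase_d1 k z = cos (phase k z) * (period_scale k * jdelta k (phase k z))"

definition sin_phase_d2 :: "real \<Rightarrow> real \<Rightarrow> real" where
  "sin_phase_d2 k z = - sin (phase k z) * (period_scale k * jdelta k (phase k z))^2
      - cos (phase k z) * ((period_scale k)^2 * k^2 * sin (phase k z) * cos (phase k z))"

lemma has_real_derivative_sin_phase:
  assumes "k^2 \<le> 1/2"
  shows "((\<lambda>z. sin (phase k z)) has_real_derivative sin_phase_d1 k z) (at z)"
  unfolding sin_phase_d1_def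
  by (auto intro!: derivative_eq_intros has_real_derivative_phase[OF assms])

lemma has_real_derivative_sin_phase_d1:
  assumes "k^2 \<le> 1/2"
  shows "(sin_phase_d1 k has_real_derivative sin_phase_d2 k z) (at z)"
  unfolding sin_phase_d1_def[abs_def] sin_phase_d2_def
  by (auto intro!: derivative_eq_intros has_real_derivative_phase[OF assms]
      has_real_derivative_jdelta_phase[OF assms] simp: algebra_simps power2_eq_square)

lemma continuous_on_sin_phase_d2:
  assumes "k^2 \<le> 1/2"
  shows "continuous_on S (sin_phase_d2 k)"
proof -
  have "continuous_on UNIV (jdelta k)"
    unfolding jdelta_def[abs_def] using k_sin_sq_bounds(2)[OF assms] by (intro continuous_intros)
  then have "continuous_on S (\<lambda>z. jdelta k (phase k z))"
    by (rule continuous_on_compose2[OF _ continuous_on_phase[OF assms]]) simp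
  then show ?thesis unfolding sin_phase_d2_def[abs_def]
    by (intro continuous_intros continuous_on_phase[OF assms])
qed

lemma sin_phase_near_sin:
  assumes "k^2 \<le> 1/2" "z \<in> {0..2*pi}"
  shows "\<bar>sin (phase k z) - sin z\<bar> \<le> 19 * k^2"
  using sin_lipschitz[of "phase k z" z] phase_near_identity[OF assms] by linarith

lemma sin_phase_d1_near_cos:
  assumes "k^2 \<le> 1/2" "z \<in> {0..2*pi}"
  shows "\<bar>sin_phase_d1 k z - cos z\<bar> \<le> 41 * k^2"
proof -
  define c G co where "c = period_scale k" and "G = jdelta k (phase k z)" and "co = cos (phase k z)"
  have c: "1 \<le> c" "c \<le> 2" "\<bar>c - 1\<bar> \<le> k^2" using period_scale_bounds[OF assms(1)] by (auto simp: c_def)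
  have G: "0 \<le> G" "G \<le> 1" "\<bar>G - 1\<bar> \<le> k^2"
    using jdelta_bounds[OF assms(1), of "phase k z"] unfolding G_def[symmetric] by auto
  have "\<bar>co - cos z\<bar> \<le> 19 * k^2"
    using cos_lipschitz[of "phase k z" z] phase_near_identity[OF assms] co_def by simp
  moreover have "c * G \<le> 2 * 1" using c G by (intro mult_mono) auto
  ultimately have t1: "\<bar>(co - cos z) * (c * G)\<bar> \<le> 19 * k^2 * 2"
    unfolding abs_mult using c G by (intro mult_mono) auto
  have "\<bar>c * (G - 1)\<bar> \<le> 2 * k^2" using c G by (simp add: abs_mult mult_mono)
  then have "\<bar>c * (G - 1) + (c - 1)\<bar> \<le> 3 * k^2" using c by linarith
  then have t2: "\<bar>cos z * (c * (G - 1) + (c - 1))\<bar> \<le> 1 * (3 * k^2)"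
    unfolding abs_mult by (intro mult_mono) auto
  have "sin_phase_d1 k z - cos z = (co - cos z) * (c * G) + cos z * (c * (G - 1) + (c - 1))"
    by (simp add: sin_phase_d1_def c_def G_def co_def algebra_simps)
  then show ?thesis using t1 t2 by linarith
qed

lemma sin_phase_d2_near_minus_sin:
  assumes "k^2 \<le> 1/2" "z \<in> {0..2*pi}"
  shows "\<bar>sin_phase_d2 k z + sin z\<bar> \<le> 26 * k^2"
proof -
  define c co s where "c = period_scale k" and "co = cos (phase k z)" and "s = sin (phase k z)"
  have c: "1 \<le> c" "c \<le> 2" "\<bar>c - 1\<bar> \<le> k^2" using period_scale_bounds[OF assms(1)] by (auto simp: c_def)
  have s1: "\<bar>s\<bar> \<le> 1" by (simp add: s_def)
  \<comment> \<open>\<open>jdelta\<^sup>2 = 1 - k\<^sup>2 sin\<^sup>2\<close> removes the square root from the second derivative.\<close>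
  have h: "(c * jdelta k (phase k z))^2 = c^2 * (1 - k^2 * s^2)"
    using jdelta_bounds(4)[OF assms(1)] by (simp add: s_def power_mult_distrib)
  have X: "sin_phase_d2 k z + sin z = - ((c^2 - 1) * s) - (s - sin z) + c^2 * k^2 * s * (s^2 - co^2)"
    unfolding sin_phase_d2_def c_def[symmetric] co_def[symmetric] s_def[symmetric] h
    by (simp add: algebra_simps power2_eq_square)
  have "c^2 - 1 = (c - 1) * (c + 1)" by (simp add: power2_eq_square algebra_simps)
  then have "\<bar>c^2 - 1\<bar> = \<bar>c - 1\<bar> * (c + 1)" using c by (simp add: abs_mult)
  also have "\<dots> \<le> k^2 * 3" using c by (intro mult_mono) auto
  finally have t1: "\<bar>(c^2 - 1) * s\<bar> \<le> 3 * k^2 * 1" unfolding abs_mult using s1 by (intro mult_mono) auto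
  have "\<bar>s^2 - co^2\<bar> \<le> 1"
    using sin_cos_squared_add[of "phase k z"] zero_le_power2[of s] zero_le_power2[of co]
    unfolding s_def co_def abs_le_iff by linarith
  then have "\<bar>s * (s^2 - co^2)\<bar> \<le> 1 * 1" unfolding abs_mult using s1 by (intro mult_mono) auto
  moreover have "c^2 * k^2 \<le> 4 * k^2" using power_mono[of c 2 2] c by (intro mult_right_mono) auto
  ultimately have "c^2 * k^2 * \<bar>s * (s^2 - co^2)\<bar> \<le> 4 * k^2 * 1"
    using mult_mono[of "c^2 * k^2" "4 * k^2" "\<bar>s * (s^2 - co^2)\<bar>" 1] by simp
  then have t3: "\<bar>c^2 * k^2 * (s * (s^2 - co^2))\<bar> \<le> 4 * k^2" by (simp add: abs_mult)
  have "\<bar>s - sin z\<bar> \<le> 19 * k^2" using sin_phase_near_sin[OF assms] by (simp add: s_def)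
  then show ?thesis unfolding X using t1 t3 by (simp add: mult.assoc abs_le_iff)
qed

lemma deriv_sin_phase_remainder:
  assumes "k^2 \<le> 1/2"
  shows "deriv (\<lambda>z. A * sin (phase k z) - a * sin z) = (\<lambda>z. A * sin_phase_d1 k z - a * cos z)"
    "deriv (\<lambda>z. A * sin_phase_d1 k z - a * cos z) = (\<lambda>z. A * sin_phase_d2 k z + a * sin z)"
proof -
  have "((\<lambda>z. A * sin (phase k z) - a * sin z) has_real_derivative A * sin_phase_d1 k z - a * cos z) (at z)" for z
    by (rule DERIV_diff[OF DERIV_cmult[OF has_real_derivative_sin_phase[OF assms]] DERIV_cmult[OF DERIV_sin]])
  then show "deriv (\<lambda>z. A * sin (phase k z) - a * sin z) = (\<lambda>z. A * sin_phase_d1 k z - a * cos z)"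
    using DERIV_imp_deriv by blast
  have "((\<lambda>z. A * sin_phase_d1 k z - a * cos z) has_real_derivative A * sin_phase_d2 k z + a * sin z) (at z)" for z
    using DERIV_diff[OF DERIV_cmult[OF has_real_derivative_sin_phase_d1[OF assms]] DERIV_cmult[OF DERIV_cos]]
    by simp
  then show "deriv (\<lambda>z. A * sin_phase_d1 k z - a * cos z) = (\<lambda>z. A * sin_phase_d2 k z + a * sin z)"
    using DERIV_imp_deriv by blast
qed

lemma abs_scaled_diff_le:
  fixes A a p q x :: real
  assumes "0 \<le> A" "\<bar>p - q\<bar> \<le> x" "\<bar>q\<bar> \<le> 1"
  shows "\<bar>A * p - a * q\<bar> \<le> A * x + \<bar>a - A\<bar>"
proof -
  have "\<bar>A * (p - q)\<bar> \<le> A * x" using assms by (simp add: abs_mult mult_left_mono)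
  moreover have "\<bar>(A - a) * q\<bar> \<le> \<bar>a - A\<bar> * 1"
    unfolding abs_mult abs_minus_commute[of A] using assms(3) by (intro mult_left_mono) auto
  moreover have "A * p - a * q = A * (p - q) + (A - a) * q" by (simp add: algebra_simps)
  ultimately show ?thesis using abs_triangle_ineq[of "A * (p - q)" "(A - a) * q"] by simp
qed

lemma H2norm_le_pointwise:
  fixes f :: "real \<Rightarrow> real"
  assumes cont: "continuous_on {0..2*pi} (\<lambda>z. (f z)^2 + (deriv f z)^2 + (deriv (deriv f) z)^2)"
    and bounds: "\<And>z. z \<in> {0..2*pi} \<Longrightarrow>
      \<bar>f z\<bar> \<le> M \<and> \<bar>deriv f z\<bar> \<le> M \<and> \<bar>deriv (deriv f) z\<bar> \<le> M"
  shows "H2norm f \<le> 5 * M"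
proof -
  have M0: "0 \<le> M" using bounds[of 0] by auto
  have "norm ((f z)^2 + (deriv f z)^2 + (deriv (deriv f) z)^2) \<le> 3 * M^2" if "z \<in> {0..2*pi}" for z
    using bounds[OF that] abs_le_square_iff[of _ M] M0
    by (smt (verit) abs_ge_zero power2_abs real_norm_def zero_le_power2)
  then have "norm (integral {0..2*pi} (\<lambda>z. (f z)^2 + (deriv f z)^2 + (deriv (deriv f) z)^2))
      \<le> 3 * M^2 * (2*pi - 0)"
    by (intro integral_bound cont) auto
  also have "\<dots> = M^2 * (6 * pi)" by simp
  also have "\<dots> \<le> M^2 * 25" using pi_approx(2) by (intro mult_left_mono) auto
  also have "\<dots> = (5 * M)^2" by (simp add: power_mult_distrib)
  finally have "sqrt (integral {0..2*pi} (\<lambda>z. (f z)^2 + (deriv f z)^2 + (deriv (deriv f) z)^2))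
      \<le> sqrt ((5 * M)^2)" by (intro real_sqrt_le_mono) simp
  also have "\<dots> = 5 * M" using M0 by (simp only: real_sqrt_abs)
  finally show ?thesis unfolding H2norm_def .
qed

lemma H2norm_sin_phase_remainder:
  assumes "k^2 \<le> 1/2" "0 \<le> A"
  shows "H2norm (\<lambda>z. A * sin (phase k z) - a * sin z) \<le> 5 * (41 * A * k^2 + \<bar>a - A\<bar>)"
proof (rule H2norm_le_pointwise, unfold deriv_sin_phase_remainder[OF assms(1)])
  show "continuous_on {0..2*pi} (\<lambda>z. (A * sin (phase k z) - a * sin z)^2
      + (A * sin_phase_d1 k z - a * cos z)^2 + (A * sin_phase_d2 k z + a * sin z)^2)"
    by (intro continuous_intros continuous_on_phase continuous_on_sin_phase_d2 assms)
      (auto intro: DERIV_isCont[OF has_real_derivative_sin_phase_d1[OF assms(1)]]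
        continuous_at_imp_continuous_on)
  fix z :: real assume z: "z \<in> {0..2*pi}"
  have A19: "A * (19 * k^2) \<le> 41 * A * k^2" and A26: "A * (26 * k^2) \<le> 41 * A * k^2"
    using assms(2) by simp_all
  have "\<bar>A * sin (phase k z) - a * sin z\<bar> \<le> 41 * A * k^2 + \<bar>a - A\<bar>"
    using abs_scaled_diff_le[OF assms(2) sin_phase_near_sin[OF assms(1) z] abs_sin_le_one, of a] A19
    by linarith
  moreover have "\<bar>A * sin_phase_d1 k z - a * cos z\<bar> \<le> 41 * A * k^2 + \<bar>a - A\<bar>"
    using abs_scaled_diff_le[OF assms(2) sin_phase_d1_near_cos[OF assms(1) z] abs_cos_le_one, of a]
    by simp
  moreover have "\<bar>sin_phase_d2 k z - - sin z\<bar> \<le> 26 * k^2"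
    using sin_phase_d2_near_minus_sin[OF assms(1) z] by simp
  then have "\<bar>A * sin_phase_d2 k z - a * - sin z\<bar> \<le> A * (26 * k^2) + \<bar>a - A\<bar>"
    by (rule abs_scaled_diff_le[OF assms(2)]) simp
  ultimately show "\<bar>A * sin (phase k z) - a * sin z\<bar> \<le> 41 * A * k^2 + \<bar>a - A\<bar> \<and>
      \<bar>A * sin_phase_d1 k z - a * cos z\<bar> \<le> 41 * A * k^2 + \<bar>a - A\<bar> \<and>
      \<bar>A * sin_phase_d2 k z + a * sin z\<bar> \<le> 41 * A * k^2 + \<bar>a - A\<bar>"
    using A26 by simp
qed

definition phase_sin_coeff :: "real \<Rightarrow> real" where
  "phase_sin_coeff k = integral {0..2*pi} (\<lambda>z. sin (phase k z) * sin z) / pi"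

lemma sin_moment_diff_le:
  fixes f g :: "real \<Rightarrow> real"
  assumes "continuous_on {0..2*pi} f" "continuous_on {0..2*pi} g"
    and "\<And>z. z \<in> {0..2*pi} \<Longrightarrow> \<bar>f z - g z\<bar> \<le> M"
  shows "\<bar>integral {0..2*pi} (\<lambda>z. f z * sin z) - integral {0..2*pi} (\<lambda>z. g z * sin z)\<bar> \<le> 2 * pi * M"
proof -
  have "\<bar>f z * sin z - g z * sin z\<bar> \<le> M * 1" if "z \<in> {0..2*pi}" for z
    unfolding left_diff_distrib[symmetric] abs_mult using assms(3)[OF that] by (intro mult_mono) auto
  then have "norm (integral {0..2*pi} (\<lambda>z. f z * sin z - g z * sin z)) \<le> M * (2*pi - 0)"
    by (intro integral_bound continuous_intros assms) auto
  moreover have "integral {0..2*pi} (\<lambda>z. f z * sin z - g z * sin z)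
      = integral {0..2*pi} (\<lambda>z. f z * sin z) - integral {0..2*pi} (\<lambda>z. g z * sin z)"
    by (intro integral_diff integrable_continuous_real continuous_intros assms)
  ultimately show ?thesis by (simp add: algebra_simps)
qed

lemma phase_sin_coeff_near_one:
  assumes "k^2 \<le> 1/2"
  shows "\<bar>phase_sin_coeff k - 1\<bar> \<le> 38 * k^2"
proof -
  have "integral {0..2*pi} (\<lambda>z. sin z * sin z) = pi"
    using integral_unique[OF has_integral_sin_sq[of 0 "2*pi"]] by (simp add: power2_eq_square)
  moreover have "continuous_on {0..2*pi} (\<lambda>z. sin (phase k z))"
    by (intro continuous_intros continuous_on_phase assms)
  ultimately have "\<bar>pi * phase_sin_coeff k - pi\<bar> \<le> 2 * pi * (19 * k^2)"
    using sin_moment_diff_le[of "\<lambda>z. sin (phase k z)" sin "19 * k^2"] sin_phase_near_sin[OF assms]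
    by (simp add: phase_sin_coeff_def continuous_on_sin continuous_on_id)
  moreover have "\<bar>pi * phase_sin_coeff k - pi\<bar> = pi * \<bar>phase_sin_coeff k - 1\<bar>"
    using abs_mult[of pi "phase_sin_coeff k - 1"] by (simp add: algebra_simps)
  ultimately show ?thesis by simp
qed

lemma phase_sin_coeff_lipschitz_modulus:
  assumes "k1^2 \<le> 1/2" "k2^2 \<le> 1/2"
  shows "\<bar>phase_sin_coeff k1 - phase_sin_coeff k2\<bar> \<le> 76 * \<bar>k1^2 - k2^2\<bar>"
proof -
  have "\<bar>sin (phase k1 z) - sin (phase k2 z)\<bar> \<le> 38 * \<bar>k1^2 - k2^2\<bar>" if "z \<in> {0..2*pi}" for z
    using sin_lipschitz[of "phase k1 z" "phase k2 z"] phase_lipschitz_modulus[OF assms that] by linarith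
  moreover have "continuous_on {0..2*pi} (\<lambda>z. sin (phase k1 z))" "continuous_on {0..2*pi} (\<lambda>z. sin (phase k2 z))"
    by (intro continuous_intros continuous_on_phase assms)+
  ultimately have "\<bar>pi * phase_sin_coeff k1 - pi * phase_sin_coeff k2\<bar> \<le> 2 * pi * (38 * \<bar>k1^2 - k2^2\<bar>)"
    using sin_moment_diff_le[of "\<lambda>z. sin (phase k1 z)" "\<lambda>z. sin (phase k2 z)" "38 * \<bar>k1^2 - k2^2\<bar>"]
    by (simp add: phase_sin_coeff_def)
  moreover have "\<bar>pi * phase_sin_coeff k1 - pi * phase_sin_coeff k2\<bar> = pi * \<bar>phase_sin_coeff k1 - phase_sin_coeff k2\<bar>"
    using abs_mult[of pi "phase_sin_coeff k1 - phase_sin_coeff k2"] by (simp add: algebra_simps)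
  ultimately show ?thesis by simp
qed


lemma UU_eq_sin_phase:
  assumes "-1 < E"
  shows "UU E z = sqrt (1 - E) * sin (phase (modk E) z)"
proof -
  have s: "sqrt (2/(1+E)) * sqrt ((1+E)/2) = 1"
    using assms by (simp add: real_sqrt_mult[symmetric])
  have "z / ell E * sqrt ((1 + E) / 2)
      = z * (2 * ellK (modk E) / pi) * (sqrt (2/(1+E)) * sqrt ((1+E)/2))"
    by (simp add: ell_def T0_def)
  also have "\<dots> = period_scale (modk E) * z" using s by (simp add: period_scale_def)
  finally show ?thesis by (simp add: UU_def u0_def jsn_def phase_def)
qed

lemma amp_eq_phase_sin_coeff:
  assumes "-1 < E" "(modk E)^2 \<le> 1/2"
  shows "amp E = sqrt (1 - E) * phase_sin_coeff (modk E)"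
proof -
  have "integral {0..2*pi} (\<lambda>z. UU E z * sin z)
      = integral {0..2*pi} (\<lambda>z. sqrt (1 - E) * (sin (phase (modk E) z) * sin z))"
    using UU_eq_sin_phase[OF assms(1)] by (simp add: mult.assoc)
  also have "\<dots> = sqrt (1 - E) * integral {0..2*pi} (\<lambda>z. sin (phase (modk E) z) * sin z)"
    by simp
  finally show ?thesis by (simp add: amp_def phase_sin_coeff_def)
qed

lemma ell_sq_eq:
  assumes "-1 < E" "(modk E)^2 \<le> 1/2"
  shows "(ell E)^2 = (1 + E) / (2 * (period_scale (modk E))^2)"
proof -
  define K where "K = ellK (modk E)"
  have K0: "K \<noteq> 0" using ellK_bounds(1)[OF assms(2)] pi_gt_zero K_def by linarith
  have s2: "(sqrt (2/(1+E)))^2 = 2/(1+E)" using assms by simp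
  have "(ell E)^2 = pi^2 / (4 * (sqrt (2/(1+E)))^2 * K^2)"
    by (simp add: ell_def T0_def K_def power_divide power_mult_distrib)
  also have "\<dots> = (1 + E) / (2 * (2 * K / pi)^2)"
    unfolding s2 using assms K0 by (simp add: field_simps power2_eq_square)
  finally show ?thesis by (simp add: period_scale_def K_def)
qed

lemma modk_sq:
  assumes "0 \<le> E" "E < 1"
  shows "(modk E)^2 = (1 - E) / (1 + E)" "(modk E)^2 \<le> 1 - E"
proof -
  show k2: "(modk E)^2 = (1 - E) / (1 + E)" unfolding modk_def using assms by simp
  have "(1 - E) / (1 + E) \<le> (1 - E) / 1" using assms by (intro divide_left_mono) auto
  then show "(modk E)^2 \<le> 1 - E" using k2 by simp
qed

text \<open>The threshold \<open>1 - 1/1280\<close> only makes the constants below absorbable (e.g.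
  \<open>38 (1 - E) \<le> 1/2\<close>); it is not optimised.\<close>

lemma amp_near_sqrt:
  assumes "1 - 1/1280 \<le> E" "E < 1"
  shows "\<bar>amp E - sqrt (1 - E)\<bar> \<le> 38 * (sqrt (1 - E))^3"
    "sqrt (1 - E) / 2 \<le> amp E" "amp E \<le> 2 * sqrt (1 - E)"
proof -
  define A k where "A = sqrt (1 - E)" and "k = modk E"
  have A0: "0 < A" and A2: "A^2 = 1 - E" using assms by (simp_all add: A_def)
  have k2: "k^2 \<le> A^2" "k^2 \<le> 1/2" using modk_sq[of E] assms by (simp_all add: k_def A2)
  have a: "amp E = A * phase_sin_coeff k"
    using amp_eq_phase_sin_coeff[of E] assms k2 by (simp add: A_def k_def)
  have h: "\<bar>phase_sin_coeff k - 1\<bar> \<le> 38 * A^2"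
    using phase_sin_coeff_near_one[OF k2(2)] k2(1) by linarith
  have "\<bar>amp E - A\<bar> = A * \<bar>phase_sin_coeff k - 1\<bar>" using abs_mult[of A "phase_sin_coeff k - 1"] A0 by (simp add: a algebra_simps)
  also have "\<dots> \<le> A * (38 * A^2)" using h A0 by (intro mult_left_mono) auto
  finally show "\<bar>amp E - sqrt (1 - E)\<bar> \<le> 38 * (sqrt (1 - E))^3"
    unfolding A_def[symmetric] by (simp add: power3_eq_cube power2_eq_square)
  have "1/2 \<le> phase_sin_coeff k" "phase_sin_coeff k \<le> 2" using h A2 assms by auto
  then show "sqrt (1 - E) / 2 \<le> amp E" "amp E \<le> 2 * sqrt (1 - E)"
    unfolding A_def[symmetric] a using A0 by (simp_all add: mult_left_mono[of _ _ A, simplified mult.commute])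
qed


lemma amp_pos:
  assumes "1 - 1/1280 \<le> E" "E < 1"
  shows "0 < amp E"
proof -
  have "0 < sqrt (1 - E)" using assms by simp
  then show ?thesis using amp_near_sqrt(2)[OF assms] by linarith
qed

lemma amp_sq_near:
  assumes "1 - 1/1280 \<le> E" "E < 1"
  shows "\<bar>(amp E)^2 - (1 - E)\<bar> \<le> 114 * (1 - E)^2" "(1 - E)^2 \<le> 16 * (amp E)^4"
proof -
  define A where "A = sqrt (1 - E)"
  note near = amp_near_sqrt[OF assms, folded A_def]
  have A0: "0 \<le> A" and A2: "A^2 = 1 - E" using assms by (simp_all add: A_def)
  have "(amp E)^2 - A^2 = (amp E - A) * (amp E + A)" by (simp add: algebra_simps power2_eq_square)
  then have "\<bar>(amp E)^2 - A^2\<bar> = \<bar>amp E - A\<bar> * (amp E + A)" using near A0 by (simp add: abs_mult)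
  also have "\<dots> \<le> (38 * A^3) * (3 * A)" using near A0 by (intro mult_mono) auto
  finally show "\<bar>(amp E)^2 - (1 - E)\<bar> \<le> 114 * (1 - E)^2"
    by (simp add: A2[symmetric] power_numeral_reduce)
  have "A^4 \<le> (2 * amp E)^4" using near A0 by (intro power_mono) auto
  then show "(1 - E)^2 \<le> 16 * (amp E)^4" by (simp add: A2[symmetric] power_mult_distrib)
qed

lemma energy_expansion:
  assumes "1 - 1/1280 \<le> E" "E < 1"
  shows "\<bar>E - (1 - (amp E)^2)\<bar> \<le> 1824 * (amp E)^4"
  using amp_sq_near[OF assms] by simp

text \<open>With \<open>s = 1 - E\<close> one has \<open>(1 + E)/2 = 1 - s/2\<close> and \<open>period_scale (modk E) = 1 + s/8 + e\<close>
  with \<open>e = O(s\<^sup>2)\<close>.\<close>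

lemma ell_sq_numerator_bound:
  fixes s e c :: real
  assumes s: "0 \<le> s" "s \<le> 1/1000" and e: "\<bar>e\<bar> \<le> 5 * s^2" and c: "c = 1 + s/8 + e"
  shows "\<bar>(1 - s/2) - (1 - 3 * s/4) * c^2\<bar> \<le> 23/2 * s^2"
proof -
  have e1: "\<bar>e\<bar> \<le> 1/100" using e s mult_left_mono[of s "1/1000" s] by (simp add: power2_eq_square)
  define u where "u = e * (2 + s/4 + e)"
  have N: "(1 - s/2) - (1 - 3 * s/4) * c^2 = s^2 * (11/64 + 3 * s/256) - u * (1 - 3 * s/4)"
    unfolding c u_def by (simp add: algebra_simps power2_eq_square, simp add: field_simps)
  have "s^2 * (11/64 + 3 * s/256) \<le> s^2 * 1" using s by (intro mult_left_mono) auto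
  then have "\<bar>s^2 * (11/64 + 3 * s/256)\<bar> \<le> s^2 * 1" using s by simp
  moreover have "\<bar>u\<bar> \<le> (5 * s^2) * (21/10)"
    unfolding u_def abs_mult using e e1 s by (intro mult_mono) auto
  moreover have "\<bar>u * (1 - 3 * s/4)\<bar> \<le> \<bar>u\<bar>"
    unfolding abs_mult using s by (intro mult_left_le) auto
  ultimately show ?thesis unfolding N by linarith
qed

lemma ell_sq_rational_approx:
  fixes s e c :: real
  assumes s: "0 \<le> s" "s \<le> 1/1000" and e: "\<bar>e\<bar> \<le> 5 * s^2" and c: "c = 1 + s/8 + e"
  shows "\<bar>(1 - s/2) / c^2 - (1 - 3 * s/4)\<bar> \<le> 13 * s^2"
proof -
  have "\<bar>e\<bar> \<le> 1/100" using e s mult_left_mono[of s "1/1000" s] by (simp add: power2_eq_square)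
  then have "(98/100)^2 \<le> c^2" using c s by (intro power_mono) auto
  then have c2: "24/25 \<le> c^2" by (simp add: power2_eq_square)
  then have "c \<noteq> 0" by auto
  then have "(1 - s/2) / c^2 - (1 - 3 * s/4) = ((1 - s/2) - (1 - 3 * s/4) * c^2) / c^2"
    by (simp add: diff_divide_distrib)
  then have "\<bar>(1 - s/2) / c^2 - (1 - 3 * s/4)\<bar> = \<bar>(1 - s/2) - (1 - 3 * s/4) * c^2\<bar> / c^2"
    using c2 by simp
  also have "\<dots> \<le> (23/2 * s^2) / (24/25)"
    by (rule frac_le) (use ell_sq_numerator_bound[OF assms] c2 in auto)
  also have "\<dots> \<le> 13 * s^2" by simp
  finally show ?thesis .
qed

lemma ell_sq_expansion:
  assumes "1 - 1/1280 \<le> E" "E < 1"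
  shows "\<bar>(ell E)^2 - (1 - 3 / 4 * (amp E)^2)\<bar> \<le> 1584 * (amp E)^4"
proof -
  define s k c where "s = 1 - E" and "k = modk E" and "c = period_scale k"
  have s0: "0 \<le> s" "s \<le> 1/1000" using assms by (auto simp: s_def)
  have ks: "k^2 = s / (2 - s)" "k^2 \<le> s" using modk_sq[of E] assms by (auto simp: s_def k_def)
  then have k2: "k^2 \<le> 1/2" using s0 by linarith
  have "k^2 - s/2 = s^2 / (2 * (2 - s))" unfolding ks(1) using s0 by (simp add: field_simps power2_eq_square)
  moreover have "s^2 / (2 * (2 - s)) \<le> s^2 / (2 * 1)" using s0 by (intro divide_left_mono) auto
  ultimately have kd: "0 \<le> k^2 - s/2" "k^2 - s/2 \<le> s^2 / 2" using s0 by auto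
  have "k^4 \<le> s^2" using power_mono[OF ks(2), of 2] by (simp add: power_mult[symmetric])
  then have e5: "\<bar>c - 1 - s/8\<bar> \<le> 5 * s^2"
    using period_scale_bounds(4)[OF k2] kd unfolding c_def abs_le_iff by linarith
  have "(ell E)^2 = (1 - s/2) / c^2"
    using ell_sq_eq[of E] k2 assms unfolding c_def k_def s_def by (simp add: field_simps)
  then have EA: "\<bar>(ell E)^2 - (1 - 3 * s/4)\<bar> \<le> 13 * s^2"
    using ell_sq_rational_approx[OF s0, of "c - 1 - s/8" c] e5 by simp
  have "(ell E)^2 - (1 - 3 / 4 * (amp E)^2) = ((ell E)^2 - (1 - 3 * s/4)) + 3/4 * ((amp E)^2 - s)"
    by (simp add: field_simps)
  then have "\<bar>(ell E)^2 - (1 - 3 / 4 * (amp E)^2)\<bar> \<le> \<bar>(ell E)^2 - (1 - 3 * s/4)\<bar> + \<bar>3/4 * ((amp E)^2 - s)\<bar>"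
    by (simp only: abs_triangle_ineq)
  also have "\<bar>3/4 * ((amp E)^2 - s)\<bar> = 3/4 * \<bar>(amp E)^2 - s\<bar>" by (simp only: abs_mult)
  finally have "\<bar>(ell E)^2 - (1 - 3 / 4 * (amp E)^2)\<bar> \<le> 13 * s^2 + 3/4 * (114 * s^2)"
    using EA amp_sq_near(1)[OF assms, folded s_def] by linarith
  moreover have "0 \<le> (amp E)^4" by simp
  ultimately show ?thesis using amp_sq_near(2)[OF assms, folded s_def] by linarith
qed

lemma H2norm_expansion:
  assumes "1 - 1/1280 \<le> E" "E < 1"
  shows "H2norm (\<lambda>z. UU E z - amp E * sin z) \<le> 3160 * (amp E)^3"
proof -
  define A k where "A = sqrt (1 - E)" and "k = modk E"
  note near = amp_near_sqrt[OF assms, folded A_def]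
  have A0: "0 \<le> A" and A2: "A^2 = 1 - E" using assms by (simp_all add: A_def)
  have k2: "k^2 \<le> A^2" "k^2 \<le> 1/2" using modk_sq[of E] assms by (simp_all add: k_def A2)
  have "(\<lambda>z. UU E z - amp E * sin z) = (\<lambda>z. A * sin (phase k z) - amp E * sin z)"
    using UU_eq_sin_phase[of E] assms by (simp add: A_def k_def)
  then have "H2norm (\<lambda>z. UU E z - amp E * sin z) \<le> 5 * (41 * A * k^2 + \<bar>amp E - A\<bar>)"
    using H2norm_sin_phase_remainder[OF k2(2) A0] by simp
  also have "\<dots> \<le> 5 * (41 * A^3 + 38 * A^3)"
    using mult_left_mono[OF k2(1) A0] near(1) by (simp add: power3_eq_cube power2_eq_square)
  also have "\<dots> \<le> 395 * (2 * amp E)^3" using power_mono[of A "2 * amp E" 3] near A0 by simp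
  finally show ?thesis by simp
qed

lemma modk_sq_lipschitz:
  assumes "0 \<le> E1" "E1 < 1" "0 \<le> E2" "E2 < 1"
  shows "\<bar>(modk E1)^2 - (modk E2)^2\<bar> \<le> 2 * \<bar>E1 - E2\<bar>"
proof -
  have p: "1 \<le> (1 + E1) * (1 + E2)" using assms mult_mono[of 1 "1 + E1" 1 "1 + E2"] by simp
  have "(modk E1)^2 - (modk E2)^2 = 2 * (E2 - E1) / ((1 + E1) * (1 + E2))"
    using assms by (simp add: modk_sq field_simps)
  then have "\<bar>(modk E1)^2 - (modk E2)^2\<bar> = \<bar>2 * (E2 - E1)\<bar> / \<bar>(1 + E1) * (1 + E2)\<bar>"
    by (simp only: abs_divide)
  also have "\<dots> = 2 * \<bar>E1 - E2\<bar> / ((1 + E1) * (1 + E2))"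
    using p assms by (simp only: abs_mult abs_minus_commute[of E2])
  also have "\<dots> \<le> 2 * \<bar>E1 - E2\<bar> / 1" using p by (intro divide_left_mono) auto
  finally show ?thesis by simp
qed

lemma amp_strict_antimono:
  assumes "1 - 1/1280 \<le> E1" "E1 < E2" "E2 < 1"
  shows "amp E2 < amp E1"
proof -
  define A1 A2 where "A1 = sqrt (1 - E1)" and "A2 = sqrt (1 - E2)"
  define h1 h2 where "h1 = phase_sin_coeff (modk E1)" and "h2 = phase_sin_coeff (modk E2)"
  have k1: "(modk E1)^2 \<le> 1 - E1" "(modk E1)^2 \<le> 1/2" and k2: "(modk E2)^2 \<le> 1/2"
    using modk_sq[of E1] modk_sq[of E2] assms by auto
  have a: "amp E1 = A1 * h1" "amp E2 = A2 * h2"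
    using amp_eq_phase_sin_coeff[of E1] amp_eq_phase_sin_coeff[of E2] k1 k2 assms
    by (simp_all add: A1_def A2_def h1_def h2_def)
  have AA: "0 \<le> A2" "A2 < A1" "A1^2 \<le> 1/1280" using assms by (auto simp: A1_def A2_def)
  have "E2 - E1 = (A1 - A2) * (A1 + A2)" using assms by (simp add: A1_def A2_def algebra_simps)
  then have "\<bar>h1 - h2\<bar> \<le> 152 * ((A1 - A2) * (A1 + A2))"
    using phase_sin_coeff_lipschitz_modulus[OF k1(2) k2] modk_sq_lipschitz[of E1 E2] assms
    unfolding h1_def h2_def by auto
  then have "\<bar>A2 * (h1 - h2)\<bar> \<le> A2 * (152 * ((A1 - A2) * (A1 + A2)))"
    using AA by (simp add: abs_mult mult_left_mono)
  also have "\<dots> = 152 * (A1 - A2) * (A2 * (A1 + A2))" by (simp add: algebra_simps)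
  also have "\<dots> \<le> 152 * (A1 - A2) * (2 / 1280)"
    using AA mult_mono[of A2 A1 "A1 + A2" "A1 + A1"] by (intro mult_left_mono) (auto simp: power2_eq_square)
  finally have "\<bar>A2 * (h1 - h2)\<bar> \<le> 152 * (A1 - A2) * (2 / 1280)" .
  moreover have "1 - 38/1280 \<le> h1"
    using phase_sin_coeff_near_one[OF k1(2)] k1(1) AA(3) assms unfolding h1_def A1_def by auto
  then have "(A1 - A2) * (1 - 38/1280) \<le> (A1 - A2) * h1" using AA by (intro mult_left_mono) auto
  moreover have "amp E1 - amp E2 = (A1 - A2) * h1 + A2 * (h1 - h2)" by (simp add: a algebra_simps)
  ultimately show ?thesis using AA by (simp add: abs_le_iff)
qed


lemma continuous_on_amp_near_one: "continuous_on {1 - 1/1280..<1} amp"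
proof -
  define S where "S = {1 - 1/1280..<(1::real)}"
  have k: "(modk E)^2 \<le> 1/2" if "E \<in> S" for E using modk_sq[of E] that by (auto simp: S_def)
  have "152-lipschitz_on S (\<lambda>E. phase_sin_coeff (modk E))"
  proof (rule lipschitz_onI)
    fix x y assume xy: "x \<in> S" "y \<in> S"
    have "\<bar>phase_sin_coeff (modk x) - phase_sin_coeff (modk y)\<bar> \<le> 76 * \<bar>(modk x)^2 - (modk y)^2\<bar>"
      by (rule phase_sin_coeff_lipschitz_modulus[OF k k]) (use xy in auto)
    also have "\<dots> \<le> 76 * (2 * \<bar>x - y\<bar>)"
      using modk_sq_lipschitz[of x y] xy by (intro mult_left_mono) (auto simp: S_def)
    finally show "dist (phase_sin_coeff (modk x)) (phase_sin_coeff (modk y)) \<le> 152 * dist x y"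
      by (simp add: dist_real_def)
  qed simp
  then have "continuous_on S (\<lambda>E. sqrt (1 - E) * phase_sin_coeff (modk E))"
    by (intro continuous_intros lipschitz_on_continuous_on)
  moreover have "amp E = sqrt (1 - E) * phase_sin_coeff (modk E)" if "E \<in> S" for E
    using amp_eq_phase_sin_coeff[OF _ k[OF that]] that by (simp add: S_def)
  ultimately show ?thesis unfolding S_def[symmetric] using continuous_on_cong by fastforce
qed

lemma bij_betw_amp_near_one: "bij_betw amp {1 - 1/1280<..<1} {0<..<amp (1 - 1/1280)}"
proof -
  define d a0 where "d = (1/1280::real)" and "a0 = amp (1 - d)"
  have "inj_on amp {1 - d<..<1}"
  proof (rule linorder_inj_onI)
    fix x y assume "x < y" "x \<in> {1 - d<..<1}" "y \<in> {1 - d<..<1}"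
    then show "amp x \<noteq> amp y" using amp_strict_antimono[of x y] by (auto simp: d_def)
  qed auto
  moreover have "amp ` {1 - d<..<1} \<subseteq> {0<..<a0}"
  proof
    fix v assume "v \<in> amp ` {1 - d<..<1}"
    then obtain x where x: "x \<in> {1 - d<..<1}" "v = amp x" by blast
    then show "v \<in> {0<..<a0}"
      using amp_pos[of x] amp_strict_antimono[of "1 - d" x] by (auto simp: d_def a0_def)
  qed
  moreover have "{0<..<a0} \<subseteq> amp ` {1 - d<..<1}"
  proof
    fix y assume y: "y \<in> {0<..<a0}"
    define b where "b = 1 - (y/4)^2"
    have "y/4 < sqrt d / 2" using y amp_near_sqrt(3)[of "1 - d"] by (simp add: a0_def d_def)
    then have "(y/4)^2 < (sqrt d / 2)^2" using y by (intro power_strict_mono) auto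
    then have b: "1 - d < b" "b < 1" using y by (auto simp: b_def d_def power_divide)
    have "amp b \<le> 2 * sqrt (1 - b)" using amp_near_sqrt(3)[of b] b by (simp add: d_def)
    also have "sqrt (1 - b) = y/4" using y by (simp add: b_def)
    finally have "amp b \<le> y" using y by simp
    moreover have "continuous_on {1 - d..b} amp"
      by (rule continuous_on_subset[OF continuous_on_amp_near_one]) (use b in \<open>auto simp: d_def\<close>)
    ultimately obtain x where x: "1 - d \<le> x" "x \<le> b" "amp x = y"
      using IVT2'[of amp b y "1 - d"] y b by (auto simp: a0_def)
    moreover have "x \<noteq> 1 - d" using x y by (auto simp: a0_def)
    ultimately show "y \<in> amp ` {1 - d<..<1}" using b by force
  qed
  ultimately show ?thesis unfolding bij_betw_def d_def a0_def by blast
qed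

theorem proposition2p1:
  shows "\<exists>\<delta> a0 C. 0 < \<delta> \<and> \<delta> < 1 \<and> 0 < a0 \<and> 0 < C \<and>
    bij_betw amp {1 - \<delta><..<1} {0<..<a0} \<and>
    (\<forall>E\<in>{1 - \<delta><..<1}.
        \<bar>E - (1 - (amp E)\<^sup>2)\<bar> \<le> C * (amp E) ^ 4 \<and>
        \<bar>(ell E)\<^sup>2 - (1 - 3 / 4 * (amp E)\<^sup>2)\<bar> \<le> C * (amp E) ^ 4 \<and>
        H2norm (\<lambda>z. UU E z - amp E * sin z) \<le> C * (amp E) ^ 3)"
proof (rule exI[of _ "1/1280"], rule exI[of _ "amp (1 - 1/1280)"], rule exI[of _ 3160], intro conjI ballI)
  show "0 < amp (1 - 1/1280)" by (rule amp_pos) simp_all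
  show "bij_betw amp {1 - 1/1280<..<1} {0<..<amp (1 - 1/1280)}" by (rule bij_betw_amp_near_one)
  fix E :: real assume "E \<in> {1 - 1/1280<..<1}"
  then have E: "1 - 1/1280 \<le> E" "E < 1" by auto
  have a4: "0 \<le> (amp E)^4" by simp
  show "\<bar>E - (1 - (amp E)\<^sup>2)\<bar> \<le> 3160 * (amp E) ^ 4"
    using energy_expansion[OF E] a4 by linarith
  show "\<bar>(ell E)\<^sup>2 - (1 - 3 / 4 * (amp E)\<^sup>2)\<bar> \<le> 3160 * (amp E) ^ 4"
    using ell_sq_expansion[OF E] a4 by linarith
  show "H2norm (\<lambda>z. UU E z - amp E * sin z) \<le> 3160 * (amp E) ^ 3"
    by (rule H2norm_expansion[OF E])
qed simp_all

end
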